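(* Under Algorithm 2(a) below, for every slot $t$, the rows of $H(t)$ are linearly independent, where $H(t)$ is the matrix whose rows are the global coefficient vectors (in $\mathbb{F}_q^{A(t)}$, with respect to the original packet stream, $A(t)$ being the number of arrivals up to and including slot $t$) of the sender's queue contents at the end of Step 3 of slot $t$.
   Context: Setting: a sender broadcasts to $n$ receivers over a slotted packet erasure broadcast channel with perfect feedback; packets are vectors over $\mathbb{F}_q$, indexed by arrival order. Algorithm 2(a) ($q>n$): The sender stores queue contents $\mathbf{y}_1,\dots,\mathbf{y}_Q$ (linear combinations of original packets) and matrices $B,B_1,\dots,B_n$ with $Q$ columns whose rows are local coefficient vectors with respect to the current queue; initially all empty. Each slot: (Step 3) append the $a$ arriving packets to the queue, set $B=I_Q$ for the new $Q$, append $a$ zero columns to each $B_j$. (Step 4) If the queue is nonempty, choose $\mathbf{g}\in\mathrm{span}(B)$ with $\mathbf{g}\notin\mathrm{span}(B_j)$ for all $j$ with $\mathrm{span}(B_j)\ne\mathrm{span}(B)$ (row spaces), and transmit $\sum_ig_i\mathbf{y}_i$; else $\mathbf{g}=\mathbf{0}$. (Step 5) If $\mathbf{g}\ne\mathbf{0}$ and receiver $j$ received it, append $\mathbf{g}$ as a row of $B_j$. (Step 6) Let $B_\Delta$ be a basis of $\bigcap_j\mathrm{span}(B_j)$, $B'$ a completion of $B_\Delta$ into a basis of $\mathrm{span}(B)$, $B''=B'\setminus B_\Delta$, and $B_j'$ a completion of $B_\Delta$ into a basis of $\mathrm{span}(B_j)$ with $B_j'':=B_j'\setminus B_\Delta\subseteq\mathrm{span}(B'')$.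 (Step 7) Replace the queue contents by the packets $\sum_ih_i\mathbf{y}_i$ for $\mathbf{h}\in B''$. (Step 8) Replace $B_j$ by $X_j$ where $B_j''=X_jB''$; set $B=I_{|B''|}$. *)

theory Defs
  imports Main
begin

text \<open>Vectors over the field are functions nat \<Rightarrow> 'a; the space F^Q is the set of
  vectors vanishing at every index \<ge> Q (index i corresponds to the (i+1)-th coordinate).
  A matrix is the list of its rows.  Appending zero columns is then the identity.\<close>

definition fullspace :: "nat \<Rightarrow> (nat \<Rightarrow> 'a::zero) set" where
  "fullspace Q = {v. \<forall>i\<ge>Q. v i = 0}"

definition comb :: "(nat \<Rightarrow> 'a::comm_ring_1) \<Rightarrow> (nat \<Rightarrow> 'a) list \<Rightarrow> nat \<Rightarrow> 'a" where
  "comb c vs = (\<lambda>i. \<Sum>k<length vs. c k * (vs ! k) i)"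

definition rspan :: "(nat \<Rightarrow> 'a::comm_ring_1) list \<Rightarrow> (nat \<Rightarrow> 'a) set" where
  "rspan vs = range (\<lambda>c. comb c vs)"

definition rlin_indep :: "(nat \<Rightarrow> 'a::comm_ring_1) list \<Rightarrow> bool" where
  "rlin_indep vs \<longleftrightarrow> (\<forall>c. comb c vs = (\<lambda>i. 0) \<longrightarrow> (\<forall>k<length vs. c k = 0))"

definition is_basis :: "(nat \<Rightarrow> 'a::comm_ring_1) list \<Rightarrow> (nat \<Rightarrow> 'a) set \<Rightarrow> bool" where
  "is_basis vs S \<longleftrightarrow> rlin_indep vs \<and> rspan vs = S"

definition unitv :: "nat \<Rightarrow> nat \<Rightarrow> 'a::comm_ring_1" where
  "unitv k = (\<lambda>i. if i = k then 1 else 0)"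

text \<open>Sender state: (A, Y, Bs) where A = number of arrivals so far, Y = list of the
  global coefficient vectors (in F^A) of the queue contents y_1..y_Q, and Bs j = rows of B_j.\<close>
type_synonym 'a state = "nat \<times> (nat \<Rightarrow> 'a) list \<times> (nat \<Rightarrow> (nat \<Rightarrow> 'a) list)"

text \<open>Step 3 with a arriving packets (packets A+1..A+a, whose global coefficient vectors are unit vectors).
  B := I_Q is implicit (span B = F^Q); appending zero columns to B_j does not change B_j in this representation.\<close>
definition step3 :: "nat \<Rightarrow> 'a::comm_ring_1 state \<Rightarrow> 'a state" where
  "step3 a s = (case s of (A, Y, Bs) \<Rightarrow>
     (A + a, Y @ map (\<lambda>i. unitv (A + i)) [0..<a], Bs))"

text \<open>Steps 4--8 of Algorithm 2(a), as a relation (all choices of the sender and all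
  reception patterns of the erasure channel are allowed).\<close>
definition steps4to8 :: "nat \<Rightarrow> 'a::field state \<Rightarrow> 'a state \<Rightarrow> bool" where
  "steps4to8 n s s' \<longleftrightarrow> (case s of (A, Y, Bs) \<Rightarrow> case s' of (A', Y', Bs') \<Rightarrow>
     A' = A \<and>
     (\<exists>g R BD B2 C X.
        (let Q = length Y;
             Bs1 = (\<lambda>j. if g \<noteq> (\<lambda>i. 0) \<and> j \<in> R then Bs j @ [g] else Bs j)
         in
        \<comment> \<open>Step 4\<close>
        (if Q = 0 then g = (\<lambda>i. 0)
         else g \<in> fullspace Q \<and> (\<forall>j<n. rspan (Bs j) \<noteq> fullspace Q \<longrightarrow> g \<notin> rspan (Bs j))) \<and>
        \<comment> \<open>Step 5: R = set of receivers that received the packet\<close>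
        R \<subseteq> {..<n} \<and>
        \<comment> \<open>Step 6\<close>
        is_basis BD (fullspace Q \<inter> (\<Inter>j\<in>{..<n}. rspan (Bs1 j))) \<and>
        is_basis (BD @ B2) (fullspace Q) \<and>
        (\<forall>j<n. is_basis (BD @ C j) (rspan (Bs1 j)) \<and> set (C j) \<subseteq> rspan B2) \<and>
        \<comment> \<open>Step 7\<close>
        Y' = map (\<lambda>h. comb h Y) B2 \<and>
        \<comment> \<open>Step 8: B_j'' = X_j B''\<close>
        (\<forall>j<n. length (X j) = length (C j) \<and>
           (\<forall>k<length (C j). X j ! k \<in> fullspace (length B2) \<and> C j ! k = comb (X j ! k) B2)) \<and>
        Bs' = (\<lambda>j. if j < n then X j else []))))"

inductive after_step3 :: "nat \<Rightarrow> 'a::field state \<Rightarrow> bool" for n where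
  first: "after_step3 n (step3 a (0, [], (\<lambda>j. [])))"
| step: "after_step3 n s \<Longrightarrow> steps4to8 n s s' \<Longrightarrow> after_step3 n (step3 a s')"

end

theory Submission
  imports Defs
begin

text \<open>The global coefficient vectors of the queue stay linearly independent and supported on the
  arrivals so far. Step 3 appends unit vectors of fresh coordinates, which cannot interfere with the
  old ones. Step 7 replaces the queue by the combinations prescribed by B'', a part of a basis of
  F^Q; such an independent family of coefficient vectors applied to independent vectors gives
  independent vectors.\<close>

lemma sum_lessThan_add_split:
  fixes f :: "nat \<Rightarrow> 'b::comm_monoid_add"
  shows "(\<Sum>k<a+b. f k) = (\<Sum>k<a. f k) + (\<Sum>k<b. f (a+k))"
  by (induction b) (simp_all add: add.assoc)

lemma comb_append:
  "comb c (xs @ ys) = (\<lambda>i. comb c xs i + comb (\<lambda>m. c (length xs + m)) ys i)"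
  unfolding comb_def
  by (rule ext) (simp add: sum_lessThan_add_split nth_append)

lemma comb_map_comb:
  fixes Y :: "(nat \<Rightarrow> 'a::comm_ring_1) list"
  shows "comb c (map (\<lambda>h. comb h Y) B) = comb (comb c B) Y"
proof (rule ext)
  fix i
  have "comb c (map (\<lambda>h. comb h Y) B) i = (\<Sum>m<length B. \<Sum>k<length Y. c m * (B!m) k * (Y!k) i)"
    by (simp add: comb_def sum_distrib_left mult.assoc)
  also have "\<dots> = (\<Sum>k<length Y. \<Sum>m<length B. c m * (B!m) k * (Y!k) i)"
    by (rule sum.swap)
  also have "\<dots> = comb (comb c B) Y i"
    by (simp add: comb_def sum_distrib_right)
  finally show "comb c (map (\<lambda>h. comb h Y) B) i = comb (comb c B) Y i" .
qed

lemma comb_in_fullspace: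
  assumes "set vs \<subseteq> fullspace Q"
  shows "comb c vs \<in> fullspace Q"
  using assms nth_mem by (fastforce simp: fullspace_def comb_def subset_iff intro!: sum.neutral)

lemma nth_in_rspan:
  assumes "k < length vs"
  shows "vs ! k \<in> rspan vs"
proof -
  have "comb (unitv k) vs i = (vs ! k) i" for i
  proof -
    have "comb (unitv k) vs i = (\<Sum>m<length vs. if m = k then (vs ! m) i else 0)"
      unfolding comb_def unitv_def by (intro sum.cong) auto
    also have "\<dots> = (vs ! k) i" using assms by (simp add: sum.delta)
    finally show ?thesis .
  qed
  then show ?thesis unfolding rspan_def by (metis rangeI ext)
qed

lemma set_subset_rspan: "set vs \<subseteq> rspan vs"
  by (auto simp: in_set_conv_nth intro: nth_in_rspan)

lemma rlin_indepI:
  assumes "\<And>c k. comb c vs = (\<lambda>i. 0) \<Longrightarrow> k < length vs \<Longrightarrow> c k = 0"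
  shows "rlin_indep vs"
  using assms unfolding rlin_indep_def by blast

lemma rlin_indep_comb_eq_zero:
  assumes "rlin_indep Y" "v \<in> fullspace (length Y)" "comb v Y = (\<lambda>i. 0)"
  shows "v = (\<lambda>i. 0)"
proof (rule ext)
  fix i
  show "v i = 0"
    using assms unfolding rlin_indep_def fullspace_def by (cases "i < length Y") auto
qed

lemma rlin_indep_appendD2:
  assumes "rlin_indep (xs @ ys)"
  shows "rlin_indep ys"
proof (rule rlin_indepI)
  fix c k assume z: "comb c ys = (\<lambda>i. 0)" and k: "k < length ys"
  define c' where "c' k = (if k < length xs then 0 else c (k - length xs))" for k
  have "comb c' xs = (\<lambda>i. 0)" by (simp add: comb_def c'_def)
  then have "comb c' (xs @ ys) = (\<lambda>i. 0)"
    using z by (simp add: comb_append c'_def)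
  then have "c' (length xs + k) = 0"
    using assms k unfolding rlin_indep_def by simp
  then show "c k = 0" by (simp add: c'_def)
qed

lemma rlin_indep_map_comb:
  fixes Y :: "(nat \<Rightarrow> 'a::comm_ring_1) list"
  assumes "rlin_indep Y" "rlin_indep B" "set B \<subseteq> fullspace (length Y)"
  shows "rlin_indep (map (\<lambda>h. comb h Y) B)"
proof (rule rlin_indepI)
  fix c k assume z: "comb c (map (\<lambda>h. comb h Y) B) = (\<lambda>i. 0)"
    and k: "k < length (map (\<lambda>h. comb h Y) B)"
  have "comb (comb c B) Y = (\<lambda>i. 0)" using z by (simp add: comb_map_comb)
  then have "comb c B = (\<lambda>i. 0)"
    using rlin_indep_comb_eq_zero[OF assms(1) comb_in_fullspace[OF assms(3)]] by blast
  then show "c k = 0" using assms(2) k unfolding rlin_indep_def by simp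
qed

lemma rlin_indep_append_unitv:
  fixes Y :: "(nat \<Rightarrow> 'a::comm_ring_1) list"
  assumes indep: "rlin_indep Y" and supp: "set Y \<subseteq> fullspace A"
  shows "rlin_indep (Y @ map (\<lambda>i. unitv (A + i)) [0..<a])"
proof (rule rlin_indepI)
  let ?U = "map (\<lambda>i. unitv (A + i)) [0..<a] :: (nat \<Rightarrow> 'a) list"
  fix c k assume z: "comb c (Y @ ?U) = (\<lambda>i. 0)" and k: "k < length (Y @ ?U)"
  let ?d = "\<lambda>m. c (length Y + m)"
  have comb_U: "comb ?d ?U (A + j) = ?d j" if "j < a" for j
  proof -
    have "comb ?d ?U (A + j) = (\<Sum>m<a. if j = m then ?d m else 0)"
      by (simp add: comb_def unitv_def if_distrib cong: if_cong)
    also have "\<dots> = ?d j" using that by (simp add: sum.delta')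
    finally show ?thesis .
  qed
  have comb_Y: "comb c Y (A + j) = 0" for j
    using comb_in_fullspace[OF supp, of c] by (simp add: fullspace_def)
  \<comment> \<open>coordinate A + j sees only the j-th new unit vector\<close>
  have d_zero: "?d j = 0" if "j < a" for j
    using fun_cong[OF z, of "A + j"] comb_Y[of j] comb_U[OF that]
    by (simp add: comb_append)
  then have "comb ?d ?U = (\<lambda>i. 0)"
    by (auto simp: comb_def intro!: ext sum.neutral)
  then have "comb c Y = (\<lambda>i. 0)"
    using z by (auto simp: comb_append fun_eq_iff)
  then have "\<forall>k<length Y. c k = 0" using indep by (simp add: rlin_indep_def)
  with d_zero[of "k - length Y"] k show "c k = 0"
    by (cases "k < length Y") auto
qed

definition queue_invariant :: "'a::field state \<Rightarrow> bool" where
  "queue_invariant s = (case s of (A, Y, Bs) \<Rightarrow> rlin_indep Y \<and> set Y \<subseteq> fullspace A)"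

lemma queue_invariant_step3:
  assumes "queue_invariant (A, Y, Bs)"
  shows "queue_invariant (step3 a (A, Y, Bs))"
proof -
  have "set (Y @ map (\<lambda>i. unitv (A + i)) [0..<a]) \<subseteq> fullspace (A + a)"
    using assms by (auto simp: queue_invariant_def fullspace_def unitv_def subset_iff)
  with assms show ?thesis
    by (simp add: queue_invariant_def step3_def rlin_indep_append_unitv)
qed

lemma queue_invariant_steps4to8:
  assumes inv: "queue_invariant (A, Y, Bs)" and step: "steps4to8 n (A, Y, Bs) (A', Y', Bs')"
  shows "queue_invariant (A', Y', Bs')"
proof -
  from step obtain BD B2 where "A' = A"
    and basis: "is_basis (BD @ B2) (fullspace (length Y))"
    and Y': "Y' = map (\<lambda>h. comb h Y) B2"
    unfolding steps4to8_def Let_def by auto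
  have "rlin_indep B2"
    using basis by (auto simp: is_basis_def intro: rlin_indep_appendD2)
  moreover have "set B2 \<subseteq> fullspace (length Y)"
    using basis set_subset_rspan[of "BD @ B2"] by (auto simp: is_basis_def)
  ultimately have "rlin_indep Y'"
    using inv Y' by (simp add: queue_invariant_def rlin_indep_map_comb)
  moreover have "set Y' \<subseteq> fullspace A'"
    using inv Y' \<open>A' = A\<close> by (auto simp: queue_invariant_def intro: comb_in_fullspace)
  ultimately show ?thesis by (simp add: queue_invariant_def)
qed

lemma after_step3_queue_invariant: "after_step3 n s \<Longrightarrow> queue_invariant s"
proof (induction rule: after_step3.induct)
  case (first a)
  show ?case
    by (rule queue_invariant_step3) (simp add: queue_invariant_def rlin_indep_def)
next
  case (step s s' a)
  then show ?case
    by (cases s; cases s') (metis queue_invariant_step3 queue_invariant_steps4to8)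
qed

theorem lemma3:
  fixes n :: nat and A :: nat and H :: "(nat \<Rightarrow> 'a::{finite,field}) list"
    and Bs :: "nat \<Rightarrow> (nat \<Rightarrow> 'a) list"
  assumes "card (UNIV :: 'a set) > n"
    and "after_step3 n (A, H, Bs)"
  shows "rlin_indep H"
  using after_step3_queue_invariant[OF assms(2)] by (simp add: queue_invariant_def)

end
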